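(* Let $a_0\in\mathbb R$, $\delta>0$, and let $b:(a_0,a_0+\delta)\to\mathbb R$ be a function whose range $\{b(a):a\in(a_0,a_0+\delta)\}$ has positive Lebesgue measure. Then for every $s>0$ and every $1\le p<\infty$, $$\sup\Big\{\frac{\|L_*f\|_{L^p(\mathbb R)}}{\|f\|_{H^s(\mathbb R)}}:\ f\in H^s(\mathbb R),\ \hat f\in L^1(\mathbb R),\ f\neq0\Big\}=+\infty.$$
   Context: For $f$ with $\hat f\in L^1(\mathbb R)$, $L_af(u)=\frac1{\sqrt{2\pi}}\int_{\mathbb R}e^{i[b(a)uv+av^2]}\hat f(v)\,dv$ (absolutely convergent), where $\hat f(v)=\frac1{\sqrt{2\pi}}\int e^{-ivt}f(t)dt$, and $L_*f(u)=\sup_{a\in(a_0,a_0+\delta)}|L_af(u)|$. $H^s(\mathbb R)$ has norm $\|f\|_{H^s}=\big(\int|\hat f(\xi)|^2(1+\xi^2)^sd\xi\big)^{1/2}$. *)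

theory Defs
  imports "HOL-Analysis.Analysis"
begin

text \<open>Functions f are represented through their Fourier transform g = hat f.
  All quantities in the statement (L_a f, L_* f, the H^s norm) depend on f only via hat f.\<close>

definition La :: "(real \<Rightarrow> real) \<Rightarrow> real \<Rightarrow> (real \<Rightarrow> complex) \<Rightarrow> real \<Rightarrow> complex" where
  "La b a g u = complex_of_real (1 / sqrt (2 * pi)) *
     integral\<^sup>L lborel (\<lambda>v. exp (\<i> * complex_of_real (b a * u * v + a * v^2)) * g v)"

definition Lstar :: "real \<Rightarrow> real \<Rightarrow> (real \<Rightarrow> real) \<Rightarrow> (real \<Rightarrow> complex) \<Rightarrow> real \<Rightarrow> ennreal" where
  "Lstar a0 \<delta> b g u = (SUP a\<in>{a0<..<a0+\<delta>}. ennreal (cmod (La b a g u)))"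

definition enn_powr :: "ennreal \<Rightarrow> real \<Rightarrow> ennreal" where
  "enn_powr x p = (if x = \<infinity> then \<infinity> else ennreal (enn2real x powr p))"

definition Lp_norm :: "real \<Rightarrow> (real \<Rightarrow> ennreal) \<Rightarrow> ennreal" where
  "Lp_norm p h = enn_powr (\<integral>\<^sup>+ x. enn_powr (h x) p \<partial>lborel) (1 / p)"

definition Hs_norm :: "real \<Rightarrow> (real \<Rightarrow> complex) \<Rightarrow> real" where
  "Hs_norm s g = sqrt (\<integral>\<xi>. (cmod (g \<xi>))^2 * (1 + \<xi>^2) powr s \<partial>lborel)"

definition admissible :: "real \<Rightarrow> (real \<Rightarrow> complex) \<Rightarrow> bool" where
  "admissible s g \<longleftrightarrow> g \<in> borel_measurable lborel \<and> integrable lborel g \<and>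
     integrable lborel (\<lambda>\<xi>. (cmod (g \<xi>))^2 * (1 + \<xi>^2) powr s)"

end

theory Submission
  imports Defs
begin

text \<open>The test functions are chirped bumps: \<open>f\<close> with \<open>hat f\<close> the indicator of \<open>[0, \<eta>]\<close>
  times \<open>exp (-i (a0 v^2 + T v))\<close>, whose \<open>H^s\<close> norm does not depend on \<open>T\<close>. When \<open>b(a) u\<close>
  is within \<open>1/2\<close> of \<open>T\<close>, the modulation cancels the chirp of \<open>L_a\<close> up to a phase of size
  less than \<open>pi/3\<close> on \<open>[0, \<eta>]\<close>, so \<open>|L_a f(u)| \<ge> \<eta> / (2 sqrt (2 pi))\<close>. Hence \<open>L_* f\<close> is
  bounded below on the union of the slabs \<open>{u. |\<beta> u - T| < 1/2}\<close>, \<open>\<beta>\<close> ranging over a finite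
  subset \<open>F\<close> of the range of \<open>b\<close>; each slab has length \<open>1/|\<beta>|\<close>, and for large \<open>T\<close> they are
  pairwise disjoint. A set of positive measure is uncountable, so \<open>F\<close> can have arbitrarily many
  points in a fixed \<open>[-M, M] - {0}\<close>, and \<open>\<parallel>L_* f\<parallel>_p \<ge> c (card F / M)^(1/p)\<close> is unbounded.\<close>

definition chirped_bump :: "real \<Rightarrow> real \<Rightarrow> real \<Rightarrow> real \<Rightarrow> complex" where
  "chirped_bump \<eta> a0 T v = indicator {0..\<eta>} v *\<^sub>R exp (\<i> * complex_of_real (- (a0 * v^2 + T * v)))"

lemma norm_chirped_bump_sq: "(cmod (chirped_bump \<eta> a0 T v))^2 = indicator {0..\<eta>} v"
  by (simp add: chirped_bump_def norm_exp_i_times split: split_indicator)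

lemma admissible_chirped_bump: "admissible s (chirped_bump \<eta> a0 T)"
proof -
  have "1 + \<xi>^2 \<noteq> 0" for \<xi> :: real
    by (metis add_pos_nonneg less_irrefl zero_le_power2 zero_less_one)
  then have "integrable lborel (\<lambda>\<xi>. indicator {0..\<eta>} \<xi> *\<^sub>R (1 + \<xi>^2) powr s :: real)"
    by (intro borel_integrable_compact) (auto intro!: continuous_intros)
  moreover have "integrable lborel (chirped_bump \<eta> a0 T)"
    unfolding chirped_bump_def by (rule borel_integrable_compact) (auto intro!: continuous_intros)
  ultimately show ?thesis
    by (simp add: admissible_def norm_chirped_bump_sq)
qed

lemma Hs_norm_chirped_bump:
  "Hs_norm s (chirped_bump \<eta> a0 T) = sqrt (\<integral>\<xi>. indicator {0..\<eta>} \<xi> * (1 + \<xi>^2) powr s \<partial>lborel)"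
  by (simp add: Hs_norm_def norm_chirped_bump_sq)

lemma Hs_norm_chirped_bump_pos:
  assumes "0 < \<eta>" "0 \<le> s"
  shows "0 < Hs_norm s (chirped_bump \<eta> a0 T)"
proof -
  have "\<eta> = (\<integral>\<xi>. indicator {0..\<eta>} \<xi> *\<^sub>R (1::real) \<partial>lborel)"
    using assms by simp
  also have "\<dots> \<le> (\<integral>\<xi>. indicator {0..\<eta>} \<xi> * (1 + \<xi>^2) powr s \<partial>lborel)"
    using admissible_chirped_bump[of s \<eta> a0 T] assms(2)
    by (intro integral_mono borel_integrable_compact)
       (auto simp: admissible_def norm_chirped_bump_sq split: split_indicator intro!: ge_one_powr_ge_zero)
  finally show ?thesis
    using assms(1) by (simp add: Hs_norm_chirped_bump)
qed

lemma cos_ge_half: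
  fixes x :: real
  assumes "\<bar>x\<bar> \<le> pi / 3"
  shows "1 / 2 \<le> cos x"
  using cos_monotone_0_pi_le[of "\<bar>x\<bar>" "pi / 3"] assms by (simp add: cos_60)

lemma norm_integral_exp_small_phase_ge:
  fixes \<theta> :: "real \<Rightarrow> real"
  assumes "continuous_on {0..\<eta>} \<theta>" "0 \<le> \<eta>" and small: "\<And>v. v \<in> {0..\<eta>} \<Longrightarrow> \<bar>\<theta> v\<bar> \<le> pi / 3"
  shows "\<eta> / 2 \<le> cmod (\<integral>v. indicator {0..\<eta>} v *\<^sub>R exp (\<i> * complex_of_real (\<theta> v)) \<partial>lborel)"
proof -
  have "\<eta> / 2 = (\<integral>v. indicator {0..\<eta>} v *\<^sub>R (1 / 2 :: real) \<partial>lborel)"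
    using assms(2) by simp
  also have "\<dots> \<le> (\<integral>v. indicator {0..\<eta>} v *\<^sub>R cos (\<theta> v) \<partial>lborel)"
    using assms(1) small cos_ge_half
    by (intro integral_mono borel_integrable_compact)
       (auto intro!: continuous_intros split: split_indicator)
  also have "\<dots> = Re (\<integral>v. indicator {0..\<eta>} v *\<^sub>R exp (\<i> * complex_of_real (\<theta> v)) \<partial>lborel)"
    using assms(1)
    by (subst integral_Re[symmetric]) (auto intro!: borel_integrable_compact continuous_intros simp: Re_exp)
  also have "\<dots> \<le> cmod (\<integral>v. indicator {0..\<eta>} v *\<^sub>R exp (\<i> * complex_of_real (\<theta> v)) \<partial>lborel)"
    by (rule complex_Re_le_cmod)
  finally show ?thesis .
qed

lemma La_chirped_bump:
  "La b a (chirped_bump \<eta> a0 T) u = complex_of_real (1 / sqrt (2 * pi)) *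
     (\<integral>v. indicator {0..\<eta>} v *\<^sub>R exp (\<i> * complex_of_real ((b a * u - T) * v + (a - a0) * v^2)) \<partial>lborel)"
proof -
  have "exp (\<i> * complex_of_real (b a * u * v + a * v^2)) * chirped_bump \<eta> a0 T v =
      indicator {0..\<eta>} v *\<^sub>R exp (\<i> * complex_of_real ((b a * u - T) * v + (a - a0) * v^2))" for v
    by (simp add: chirped_bump_def exp_add[symmetric] algebra_simps)
  then show ?thesis
    by (simp add: La_def)
qed

lemma norm_La_chirped_bump_ge:
  assumes "0 \<le> \<eta>" and small: "\<bar>b a * u - T\<bar> * \<eta> + \<bar>a - a0\<bar> * \<eta>^2 \<le> pi / 3"
  shows "\<eta> / (2 * sqrt (2 * pi)) \<le> cmod (La b a (chirped_bump \<eta> a0 T) u)"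
proof -
  define \<theta> where "\<theta> v = (b a * u - T) * v + (a - a0) * v^2" for v
  have "\<bar>\<theta> v\<bar> \<le> pi / 3" if "v \<in> {0..\<eta>}" for v
  proof -
    have "\<bar>\<theta> v\<bar> \<le> \<bar>b a * u - T\<bar> * v + \<bar>a - a0\<bar> * v^2"
      using that by (auto simp: \<theta>_def abs_mult intro: abs_triangle_ineq[THEN order_trans])
    also have "\<dots> \<le> \<bar>b a * u - T\<bar> * \<eta> + \<bar>a - a0\<bar> * \<eta>^2"
      using that by (intro add_mono mult_left_mono power_mono) auto
    finally show ?thesis using small by linarith
  qed
  then have "\<eta> / 2 \<le> cmod (\<integral>v. indicator {0..\<eta>} v *\<^sub>R exp (\<i> * complex_of_real (\<theta> v)) \<partial>lborel)"
    using assms(1) unfolding \<theta>_def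
    by (intro norm_integral_exp_small_phase_ge) (auto intro!: continuous_intros)
  then have "(\<eta> / 2) / sqrt (2 * pi) \<le>
      cmod (\<integral>v. indicator {0..\<eta>} v *\<^sub>R exp (\<i> * complex_of_real (\<theta> v)) \<partial>lborel) / sqrt (2 * pi)"
    by (rule divide_right_mono) simp
  also have "\<dots> = cmod (La b a (chirped_bump \<eta> a0 T) u)"
    unfolding La_chirped_bump norm_mult norm_of_real \<theta>_def by simp
  finally show ?thesis
    by simp
qed

lemma Lstar_chirped_bump_ge:
  assumes "a \<in> {a0<..<a0 + \<delta>}" "0 \<le> \<eta>" "\<eta> \<le> 1" "\<delta> * \<eta>^2 \<le> 1 / 2"
    and "\<bar>b a * u - T\<bar> < 1 / 2"
  shows "ennreal (\<eta> / (2 * sqrt (2 * pi))) \<le> Lstar a0 \<delta> b (chirped_bump \<eta> a0 T) u"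
proof -
  have "\<bar>b a * u - T\<bar> * \<eta> \<le> 1 / 2"
    using assms(3,5) mult_left_mono[of \<eta> 1 "\<bar>b a * u - T\<bar>"] by simp
  moreover have "\<bar>a - a0\<bar> * \<eta>^2 \<le> \<delta> * \<eta>^2"
    using assms(1) by (intro mult_right_mono) auto
  ultimately have "\<bar>b a * u - T\<bar> * \<eta> + \<bar>a - a0\<bar> * \<eta>^2 \<le> pi / 3"
    using assms(4) pi_gt3 by linarith
  then show ?thesis
    unfolding Lstar_def using assms(1,2)
    by (intro SUP_upper2 ennreal_leI norm_La_chirped_bump_ge)
qed

lemma ennreal_powr_le_enn_powr:
  assumes "ennreal x \<le> y" "0 \<le> x" "0 \<le> p"
  shows "ennreal (x powr p) \<le> enn_powr y p"
proof (cases "y = \<infinity>")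
  case False
  then have "x \<le> enn2real y"
    using assms(1,2) enn2real_mono[OF assms(1)] by (simp add: top.not_eq_extremum)
  then show ?thesis
    using False assms(2,3) by (simp add: enn_powr_def powr_mono2)
qed (simp add: enn_powr_def)

lemma Lp_norm_ge_on_set:
  assumes "S \<in> sets lborel" "ennreal m \<le> emeasure lborel S" "0 \<le> m"
    and "0 \<le> c" "0 < p" "\<And>u. u \<in> S \<Longrightarrow> ennreal c \<le> h u"
  shows "ennreal (c * m powr (1 / p)) \<le> Lp_norm p h"
proof -
  have "ennreal (c powr p * m) = ennreal (c powr p) * ennreal m"
    using assms(3) by (simp add: ennreal_mult)
  also have "\<dots> \<le> ennreal (c powr p) * emeasure lborel S"
    using assms(2) by (rule mult_left_mono) simp
  also have "\<dots> = (\<integral>\<^sup>+ u. ennreal (c powr p) * indicator S u \<partial>lborel)"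
    using assms(1) by (simp add: nn_integral_cmult_indicator)
  also have "\<dots> \<le> (\<integral>\<^sup>+ u. enn_powr (h u) p \<partial>lborel)"
    using assms(4-6) ennreal_powr_le_enn_powr
    by (intro nn_integral_mono) (simp split: split_indicator)
  finally have "ennreal ((c powr p * m) powr (1 / p)) \<le> Lp_norm p h"
    unfolding Lp_norm_def using assms(3-5) by (intro ennreal_powr_le_enn_powr) auto
  then show ?thesis
    using assms(3-5) by (simp add: powr_mult powr_powr)
qed

lemma slab_eq_interval:
  fixes \<beta> T :: real
  assumes "\<beta> \<noteq> 0"
  shows "{u. \<bar>\<beta> * u - T\<bar> < 1 / 2} = {T / \<beta> - 1 / (2 * \<bar>\<beta>\<bar>) <..< T / \<beta> + 1 / (2 * \<bar>\<beta>\<bar>)}"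
proof -
  have slab_iff: "\<bar>\<beta> * u - T\<bar> < 1 / 2 \<longleftrightarrow> \<bar>u - T / \<beta>\<bar> < 1 / (2 * \<bar>\<beta>\<bar>)" for u
  proof -
    have "\<beta> * u - T = \<beta> * (u - T / \<beta>)"
      using assms by (simp add: field_simps)
    then have "\<bar>\<beta> * u - T\<bar> = \<bar>\<beta>\<bar> * \<bar>u - T / \<beta>\<bar>"
      by (simp add: abs_mult)
    then show ?thesis
      using assms by (simp add: field_simps)
  qed
  show ?thesis
    by (simp only: set_eq_iff mem_Collect_eq slab_iff) (simp add: abs_diff_less_iff)
qed

lemma emeasure_slab:
  fixes \<beta> T :: real
  assumes "\<beta> \<noteq> 0"
  shows "emeasure lborel {u. \<bar>\<beta> * u - T\<bar> < 1 / 2} = ennreal (1 / \<bar>\<beta>\<bar>)"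
  unfolding slab_eq_interval[OF assms] by simp

lemma eventually_disjoint_slabs:
  fixes F :: "real set"
  assumes "finite F"
  shows "\<forall>\<^sub>F T in at_top. disjoint_family_on (\<lambda>\<beta>. {u. \<bar>\<beta> * u - T\<bar> < 1 / 2}) F"
proof -
  have "\<forall>\<^sub>F T in at_top. \<beta> \<noteq> \<gamma> \<longrightarrow> {u. \<bar>\<beta> * u - T\<bar> < 1 / 2} \<inter> {u. \<bar>\<gamma> * u - T\<bar> < 1 / 2} = {}"
    for \<beta> \<gamma> :: real
    using eventually_ge_at_top[of "\<bar>\<beta>\<bar> / \<bar>\<beta> - \<gamma>\<bar> + 1 / 2"]
  proof eventually_elim
    case (elim T)
    show ?case
    proof (intro impI equals0I)
      fix u assume "\<beta> \<noteq> \<gamma>" and "u \<in> {u. \<bar>\<beta> * u - T\<bar> < 1 / 2} \<inter> {u. \<bar>\<gamma> * u - T\<bar> < 1 / 2}"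
      then have \<beta>u: "\<bar>\<beta> * u - T\<bar> < 1 / 2" and "\<bar>\<gamma> * u - T\<bar> < 1 / 2"
        by auto
      then have "\<bar>(\<beta> - \<gamma>) * u\<bar> < 1"
        unfolding left_diff_distrib by arith
      then have "\<bar>u\<bar> < 1 / \<bar>\<beta> - \<gamma>\<bar>"
        using \<open>\<beta> \<noteq> \<gamma>\<close> by (simp add: abs_mult pos_less_divide_eq mult.commute)
      then have "\<bar>\<beta>\<bar> * \<bar>u\<bar> \<le> \<bar>\<beta>\<bar> / \<bar>\<beta> - \<gamma>\<bar>"
        using mult_left_mono[of "\<bar>u\<bar>" "1 / \<bar>\<beta> - \<gamma>\<bar>" "\<bar>\<beta>\<bar>"] by simp
      then show False
        using \<beta>u elim unfolding abs_mult[symmetric] by arith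
    qed
  qed
  then show ?thesis
    unfolding disjoint_family_on_def using assms by (intro eventually_ball_finite ballI) auto
qed

lemma emeasure_slabs:
  fixes F :: "real set"
  assumes "finite F" "0 \<notin> F"
  obtains T where "emeasure lborel (\<Union>\<beta>\<in>F. {u. \<bar>\<beta> * u - T\<bar> < 1 / 2}) = ennreal (\<Sum>\<beta>\<in>F. 1 / \<bar>\<beta>\<bar>)"
proof -
  obtain T where disj: "disjoint_family_on (\<lambda>\<beta>. {u. \<bar>\<beta> * u - T\<bar> < 1 / 2}) F"
    using eventually_happens'[OF _ eventually_disjoint_slabs[OF assms(1)]] by auto
  have "emeasure lborel (\<Union>\<beta>\<in>F. {u. \<bar>\<beta> * u - T\<bar> < 1 / 2}) =
      (\<Sum>\<beta>\<in>F. emeasure lborel {u. \<bar>\<beta> * u - T\<bar> < 1 / 2})"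
    using disj assms(1) by (intro sum_emeasure[symmetric]) auto
  also have "\<dots> = (\<Sum>\<beta>\<in>F. ennreal (1 / \<bar>\<beta>\<bar>))"
    using assms(2) by (intro sum.cong refl emeasure_slab) auto
  also have "\<dots> = ennreal (\<Sum>\<beta>\<in>F. 1 / \<bar>\<beta>\<bar>)"
    by (rule sum_ennreal) simp
  finally show ?thesis
    by (rule that)
qed

lemma uncountable_imp_infinite_punctured_interval:
  fixes B :: "real set"
  assumes "uncountable B"
  obtains M where "0 < M" "infinite (B \<inter> {-M..M} - {0})"
proof (rule ccontr)
  assume "\<not> thesis"
  then have "finite (B \<inter> {-real (Suc n)..real (Suc n)} - {0})" for n
    using that of_nat_0_less_iff zero_less_Suc by blast
  then have "countable (insert 0 (\<Union>n. B \<inter> {-real (Suc n)..real (Suc n)} - {0}))"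
    by (intro countable_insert countable_UN) (auto intro: countable_finite)
  moreover have "B \<subseteq> insert 0 (\<Union>n. B \<inter> {-real (Suc n)..real (Suc n)} - {0})"
  proof
    fix x assume "x \<in> B"
    have "\<bar>x\<bar> \<le> real (Suc (nat \<lceil>\<bar>x\<bar>\<rceil>))"
      by linarith
    then have "x \<in> B \<inter> {-real (Suc (nat \<lceil>\<bar>x\<bar>\<rceil>))..real (Suc (nat \<lceil>\<bar>x\<bar>\<rceil>))}"
      using \<open>x \<in> B\<close> by (simp only: Int_iff atLeastAtMost_iff abs_le_iff) auto
    then show "x \<in> insert 0 (\<Union>n. B \<inter> {-real (Suc n)..real (Suc n)} - {0})"
      by blast
  qed
  ultimately show False
    using assms countable_subset by blast
qed

lemma Lp_norm_Lstar_chirped_bump_ge: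
  assumes "finite F" "F \<subseteq> b ` {a0<..<a0 + \<delta>} \<inter> {-M..M} - {0}" "0 < M"
    and "0 < \<eta>" "\<eta> \<le> 1" "\<delta> * \<eta>^2 \<le> 1 / 2" "0 < p"
  obtains T where "ennreal (\<eta> / (2 * sqrt (2 * pi)) * (card F / M) powr (1 / p))
    \<le> Lp_norm p (Lstar a0 \<delta> b (chirped_bump \<eta> a0 T))"
proof -
  have "0 \<notin> F"
    using assms(2) by blast
  then obtain T where T: "emeasure lborel (\<Union>\<beta>\<in>F. {u. \<bar>\<beta> * u - T\<bar> < 1 / 2}) = ennreal (\<Sum>\<beta>\<in>F. 1 / \<bar>\<beta>\<bar>)"
    using emeasure_slabs[OF assms(1)] by blast
  have "card F / M = (\<Sum>\<beta>\<in>F. 1 / M)"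
    by simp
  also have "\<dots> \<le> (\<Sum>\<beta>\<in>F. 1 / \<bar>\<beta>\<bar>)"
    using assms(2,3) by (intro sum_mono frac_le) (auto simp: subset_iff abs_le_iff)
  finally have "ennreal (card F / M) \<le> emeasure lborel (\<Union>\<beta>\<in>F. {u. \<bar>\<beta> * u - T\<bar> < 1 / 2})"
    unfolding T by (rule ennreal_leI)
  moreover have "(\<Union>\<beta>\<in>F. {u. \<bar>\<beta> * u - T\<bar> < 1 / 2}) \<in> sets lborel"
    using assms(1) by (intro sets.finite_UN borel_open open_Collect_less) (auto intro!: continuous_intros)
  moreover have "ennreal (\<eta> / (2 * sqrt (2 * pi))) \<le> Lstar a0 \<delta> b (chirped_bump \<eta> a0 T) u"
    if "u \<in> (\<Union>\<beta>\<in>F. {u. \<bar>\<beta> * u - T\<bar> < 1 / 2})" for u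
  proof -
    from that obtain \<beta> where "\<beta> \<in> F" "\<bar>\<beta> * u - T\<bar> < 1 / 2"
      by blast
    moreover from \<open>\<beta> \<in> F\<close> assms(2) obtain a where "a \<in> {a0<..<a0 + \<delta>}" "\<beta> = b a"
      by blast
    ultimately show ?thesis
      using assms(4-6) by (intro Lstar_chirped_bump_ge) auto
  qed
  ultimately show ?thesis
    using assms(3,4,7) by (intro that Lp_norm_ge_on_set) auto
qed

lemma SUP_Lp_norm_Lstar_chirped_bump:
  assumes "uncountable (b ` {a0<..<a0 + \<delta>})" "0 < \<eta>" "\<eta> \<le> 1" "\<delta> * \<eta>^2 \<le> 1 / 2" "0 < p"
  shows "(SUP T. Lp_norm p (Lstar a0 \<delta> b (chirped_bump \<eta> a0 T))) = \<infinity>"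
proof -
  define c where "c = \<eta> / (2 * sqrt (2 * pi))"
  have "0 < c"
    using assms(2) by (simp add: c_def)
  obtain M where M: "0 < M" "infinite (b ` {a0<..<a0 + \<delta>} \<inter> {-M..M} - {0})"
    using uncountable_imp_infinite_punctured_interval[OF assms(1)] .
  have "\<exists>T. of_nat n \<le> Lp_norm p (Lstar a0 \<delta> b (chirped_bump \<eta> a0 T))" for n
  proof -
    define k where "k = nat \<lceil>M * (n / c) powr p\<rceil>"
    obtain F where F: "finite F" "card F = k" "F \<subseteq> b ` {a0<..<a0 + \<delta>} \<inter> {-M..M} - {0}"
      using infinite_arbitrarily_large[OF M(2)] by blast
    obtain T where T: "ennreal (c * (k / M) powr (1 / p)) \<le> Lp_norm p (Lstar a0 \<delta> b (chirped_bump \<eta> a0 T))"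
      using Lp_norm_Lstar_chirped_bump_ge[OF F(1,3) M(1) assms(2-5)] unfolding c_def F(2) by blast
    have "(n / c) powr p \<le> k / M"
      using M(1) real_nat_ceiling_ge[of "M * (n / c) powr p"] by (simp add: k_def pos_le_divide_eq mult.commute)
    then have "((n / c) powr p) powr (1 / p) \<le> (k / M) powr (1 / p)"
      using assms(5) by (intro powr_mono2) auto
    then have "n \<le> c * (k / M) powr (1 / p)"
      using assms(5) \<open>0 < c\<close> by (simp add: powr_powr pos_divide_le_eq mult.commute)
    then show ?thesis
      using T by (metis ennreal_leI ennreal_of_nat_eq_real_of_nat order_trans)
  qed
  then show ?thesis
    unfolding infinity_ennreal_def by (intro ennreal_SUP_eq_top) auto
qed

theorem proposition4:
  fixes a0 \<delta> s p :: real and b :: "real \<Rightarrow> real"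
  assumes "\<delta> > 0"
    and "b ` {a0<..<a0+\<delta>} \<in> sets lebesgue"
    and "emeasure lebesgue (b ` {a0<..<a0+\<delta>}) > 0"
    and "s > 0" and "1 \<le> p"
  shows "(SUP g\<in>{g. admissible s g \<and> Hs_norm s g \<noteq> 0}.
            Lp_norm p (Lstar a0 \<delta> b g) / ennreal (Hs_norm s g)) = \<infinity>"
proof -
  define \<eta> where "\<eta> = 1 / (1 + \<delta>)"
  have "2 * \<delta> \<le> (1 + \<delta>)^2"
    using zero_le_power2[of \<delta>] by (simp add: power2_sum)
  then have \<eta>: "0 < \<eta>" "\<eta> \<le> 1" "\<delta> * \<eta>^2 \<le> 1 / 2"
    using assms(1) by (auto simp: \<eta>_def power_divide)
  have "uncountable (b ` {a0<..<a0+\<delta>})"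
    using assms(3) countable_imp_null_set_lborel null_sets_completionI by force
  then have Lp_unbounded: "(SUP T. Lp_norm p (Lstar a0 \<delta> b (chirped_bump \<eta> a0 T))) = \<infinity>"
    using \<eta> assms(5) by (intro SUP_Lp_norm_Lstar_chirped_bump) auto
  define H where "H = Hs_norm s (chirped_bump \<eta> a0 0)"
  have H: "Hs_norm s (chirped_bump \<eta> a0 T) = H" for T
    by (simp add: H_def Hs_norm_chirped_bump)
  have "0 < H"
    using \<eta>(1) assms(4) by (simp add: H_def Hs_norm_chirped_bump_pos)
  have "Lp_norm p (Lstar a0 \<delta> b (chirped_bump \<eta> a0 T)) / ennreal H
      \<le> (SUP g\<in>{g. admissible s g \<and> Hs_norm s g \<noteq> 0}. Lp_norm p (Lstar a0 \<delta> b g) / ennreal (Hs_norm s g))" for T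
    using \<open>0 < H\<close> by (intro SUP_upper2[of "chirped_bump \<eta> a0 T"]) (auto simp: H admissible_chirped_bump)
  then have "(SUP T. Lp_norm p (Lstar a0 \<delta> b (chirped_bump \<eta> a0 T))) / ennreal H
      \<le> (SUP g\<in>{g. admissible s g \<and> Hs_norm s g \<noteq> 0}. Lp_norm p (Lstar a0 \<delta> b g) / ennreal (Hs_norm s g))"
    by (simp add: SUP_divide_ennreal SUP_least)
  then show ?thesis
    using Lp_unbounded by (simp add: ennreal_top_divide top_unique)
qed

end
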